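(* Let $\mathcal{K}$ be a field of characteristic zero, let $c\in\mathcal{K}[x_1,\dots,x_n]$ be nonconstant, let $y_1\in\mathcal{K}[x_1,\dots,x_n]$, and let $u_1,\dots,u_n$ be new variables; write $\underline{x}=(x_1,\dots,x_n)$, $\underline{u}=(u_1,\dots,u_n)$. Then the following are equivalent: (i) $c(\underline{x})=\ell(y_1(\underline{x}))$ for some univariate polynomial $\ell$ over $\mathcal{K}$, and $y_1$ is a coordinate of $\mathcal{K}[x_1,\dots,x_n]$; (ii) $y_1(\underline{x})-y_1(\underline{u})$ divides $c(\underline{x})-c(\underline{u})$ in $\mathcal{K}[\underline{u},\underline{x}]$, and $y_1$ is a coordinate of $\mathcal{K}[x_1,\dots,x_n]$.
   Context: A polynomial $y_1\in\mathcal{K}[x_1,\dots,x_n]$ is a coordinate if there exist $y_2,\dots,y_n$ with $\mathcal{K}[x_1,\dots,x_n]=\mathcal{K}[y_1,y_2,\dots,y_n]$. *)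

theory Defs
  imports "HOL-Library.Poly_Mapping" "HOL-Computational_Algebra.Polynomial"
begin

text \<open>Multivariate polynomials over a field: finitely supported maps from monomials
(finitely supported exponent vectors, variables indexed by nat) to coefficients.\<close>
type_synonym 'a mpoly = "(nat \<Rightarrow>\<^sub>0 nat) \<Rightarrow>\<^sub>0 'a"

definition mconst :: "'a::zero \<Rightarrow> 'a mpoly" where
  "mconst a = Poly_Mapping.single 0 a"

definition mvar :: "nat \<Rightarrow> 'a::{zero,one} mpoly" where
  "mvar i = Poly_Mapping.single (Poly_Mapping.single i 1) 1"

definition mvars :: "'a::zero mpoly \<Rightarrow> nat set" where
  "mvars p = (\<Union>m\<in>Poly_Mapping.keys p. Poly_Mapping.keys m)"

definition polys_in :: "nat set \<Rightarrow> 'a::zero mpoly set" where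
  "polys_in V = {p. mvars p \<subseteq> V}"

definition msubst :: "(nat \<Rightarrow> 'a::comm_ring_1 mpoly) \<Rightarrow> 'a mpoly \<Rightarrow> 'a mpoly" where
  "msubst \<sigma> p = (\<Sum>m\<in>Poly_Mapping.keys p. mconst (Poly_Mapping.lookup p m) * (\<Prod>i\<in>Poly_Mapping.keys m. \<sigma> i ^ Poly_Mapping.lookup m i))"

definition ucomp :: "'a::comm_ring_1 poly \<Rightarrow> 'a mpoly \<Rightarrow> 'a mpoly" where
  "ucomp l y = (\<Sum>k\<le>degree l. mconst (coeff l k) * y ^ k)"

text \<open>y1 is a coordinate of K[x_0..x_{n-1}]: there are y_2..y_n in K[x] with
  K[x] = K[y_1,...,y_n], i.e. every x_i is a polynomial expression in the y's.\<close>
definition is_coordinate :: "nat \<Rightarrow> 'a::comm_ring_1 mpoly \<Rightarrow> bool" where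
  "is_coordinate n y1 \<longleftrightarrow> 0 < n \<and>
     (\<exists>ys. ys 0 = y1 \<and> (\<forall>i<n. ys i \<in> polys_in {..<n}) \<and>
        (\<forall>i<n. \<exists>q \<in> polys_in {..<n}. msubst ys q = mvar i))"

text \<open>Shift variables x_i to u_i := x_{n+i}.\<close>
definition shiftvars :: "nat \<Rightarrow> 'a::comm_ring_1 mpoly \<Rightarrow> 'a mpoly" where
  "shiftvars n p = msubst (\<lambda>i. mvar (n + i)) p"

end

theory Submission
  imports Defs "Jordan_Normal_Form.Determinant"
begin

text \<open>
  (i) \<Longrightarrow> (ii): \<open>y(x) - y(u)\<close> divides \<open>l(y(x)) - l(y(u))\<close> for every univariate \<open>l\<close>.

  (ii) \<Longrightarrow> (i): complete \<open>y\<close> to a coordinate system \<open>ys\<close> with \<open>x\<^sub>i = q\<^sub>i(ys)\<close>.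
  Substituting \<open>q(y, 0, \<dots>, 0)\<close> for \<open>u\<close> annihilates \<open>y(x) - y(u)\<close>,
  because \<open>y(q) = x\<^sub>0\<close>; hence \<open>c(x) = c(q(y, 0, \<dots>, 0))\<close>, a polynomial in \<open>y\<close>.
  The identity \<open>y(q) = x\<^sub>0\<close> follows from \<open>q(ys) = x\<close> once \<open>p \<mapsto> p(ys)\<close> is injective: by the
  chain rule the Jacobian matrix of \<open>ys\<close> is invertible, so \<open>F(ys) = 0\<close> forces all
  \<open>(\<partial>F/\<partial>x\<^sub>j)(ys) = 0\<close>, and induction on the degree gives \<open>F = 0\<close> in characteristic zero.
\<close>

abbreviation lookup where "lookup \<equiv> Poly_Mapping.lookup"
abbreviation keys where "keys \<equiv> Poly_Mapping.keys"
abbreviation single where "single \<equiv> Poly_Mapping.single"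

lemma mconst_0 [simp]: "mconst 0 = 0"
  by (simp add: mconst_def)

lemma mconst_1 [simp]: "mconst 1 = 1"
  by (simp add: mconst_def)

lemma mconst_add: "mconst (a + b) = mconst a + mconst b"
  by (simp add: mconst_def single_add)

lemma mconst_mult: "mconst (a * b) = mconst a * (mconst b :: 'a::comm_ring_1 mpoly)"
  by (simp add: mconst_def mult_single)

lemma sum_single_lookup: "(\<Sum>m\<in>keys p. single m (lookup p m)) = p"
  by (rule poly_mapping_eqI)
    (auto simp: lookup_sum lookup_single when_def in_keys_iff intro: sum.neutral split: if_splits)

lemma mult_eq_sum_single:
  "p * q = (\<Sum>m\<in>keys p. \<Sum>m'\<in>keys q. single m (lookup p m) * single m' (lookup q m'))"
  by (subst (1) sum_single_lookup[symmetric], subst (1) sum_single_lookup[symmetric])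
    (simp add: sum_product)

lemma keys_diff_single_subset: "keys (m - single i (1::nat)) \<subseteq> keys m"
  by (auto simp: in_keys_iff lookup_minus)

lemma diff_single_add_single:
  "0 < lookup m i \<Longrightarrow> m - single i 1 + single i (1::nat) = m"
  by (rule poly_mapping_eqI) (auto simp: lookup_add lookup_minus lookup_single when_def)

lemma diff_single_add_commute:
  "0 < lookup m i \<Longrightarrow> m - single i 1 + m' = m + m' - single i (1::nat)"
  by (rule poly_mapping_eqI) (auto simp: lookup_add lookup_minus lookup_single when_def)

subsection \<open>Substitution\<close>

definition subst_monom :: "(nat \<Rightarrow> 'a::comm_ring_1 mpoly) \<Rightarrow> (nat \<Rightarrow>\<^sub>0 nat) \<Rightarrow> 'a mpoly" where
  "subst_monom \<sigma> m = (\<Prod>i\<in>keys m. \<sigma> i ^ lookup m i)"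

lemma msubst_eq_sum_subst_monom:
  "msubst \<sigma> p = (\<Sum>m\<in>keys p. mconst (lookup p m) * subst_monom \<sigma> m)"
  unfolding msubst_def subst_monom_def ..

lemma subst_monom_add: "subst_monom \<sigma> (m + m') = subst_monom \<sigma> m * subst_monom \<sigma> m'"
proof -
  let ?S = "keys m \<union> keys m'"
  have expand: "subst_monom \<sigma> k = (\<Prod>i\<in>?S. \<sigma> i ^ lookup k i)" if "keys k \<subseteq> ?S" for k
    unfolding subst_monom_def
    by (rule prod.mono_neutral_left) (use that in \<open>auto simp: in_keys_iff\<close>)
  have "subst_monom \<sigma> (m + m') = (\<Prod>i\<in>?S. \<sigma> i ^ lookup m i * \<sigma> i ^ lookup m' i)"
    by (simp add: expand keys_add lookup_add power_add)
  also have "\<dots> = subst_monom \<sigma> m * subst_monom \<sigma> m'"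
    by (simp add: prod.distrib expand)
  finally show ?thesis .
qed

lemma msubst_0 [simp]: "msubst \<sigma> 0 = 0"
  by (simp add: msubst_def)

lemma msubst_single: "msubst \<sigma> (single m a) = mconst a * subst_monom \<sigma> m"
  by (simp add: msubst_eq_sum_subst_monom)

lemma msubst_add: "msubst \<sigma> (p + q) = msubst \<sigma> p + msubst \<sigma> q"
  unfolding msubst_eq_sum_subst_monom
  by (rule setsum_keys_plus_distrib) (simp_all add: mconst_add distrib_right)

lemma msubst_uminus: "msubst \<sigma> (- p) = - msubst \<sigma> p"
  by (metis add.right_inverse msubst_0 msubst_add minus_unique)

lemma msubst_diff: "msubst \<sigma> (p - q) = msubst \<sigma> p - msubst \<sigma> q"
  using msubst_add[of \<sigma> p "- q"] by (simp add: msubst_uminus)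

lemma msubst_sum: "msubst \<sigma> (sum f S) = (\<Sum>x\<in>S. msubst \<sigma> (f x))"
  by (induction S rule: infinite_finite_induct) (auto simp: msubst_add)

lemma msubst_mult: "msubst \<sigma> (p * q) = msubst \<sigma> p * msubst \<sigma> q"
proof -
  have single: "msubst \<sigma> (single m a * single m' b) = msubst \<sigma> (single m a) * msubst \<sigma> (single m' b)"
    for m m' and a b :: 'a
    by (simp add: mult_single msubst_single subst_monom_add mconst_mult algebra_simps)
  have "msubst \<sigma> (p * q) = (\<Sum>m\<in>keys p. \<Sum>m'\<in>keys q.
      msubst \<sigma> (single m (lookup p m)) * msubst \<sigma> (single m' (lookup q m')))"
    by (simp add: mult_eq_sum_single[of p q] msubst_sum single)
  also have "\<dots> = msubst \<sigma> (\<Sum>m\<in>keys p. single m (lookup p m)) *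
      msubst \<sigma> (\<Sum>m'\<in>keys q. single m' (lookup q m'))"
    by (simp add: msubst_sum sum_product)
  finally show ?thesis by (simp only: sum_single_lookup)
qed

lemma msubst_mconst [simp]: "msubst \<sigma> (mconst a) = mconst a"
  by (simp add: mconst_def msubst_single subst_monom_def)

lemma msubst_1 [simp]: "msubst \<sigma> 1 = 1"
  using msubst_mconst[of \<sigma> 1] by simp

lemma msubst_power: "msubst \<sigma> (p ^ k) = msubst \<sigma> p ^ k"
  by (induction k) (auto simp: msubst_mult)

lemma msubst_mvar [simp]: "msubst \<sigma> (mvar i) = \<sigma> i"
  by (simp add: mvar_def msubst_single subst_monom_def)

lemma mvar_power: "mvar i ^ e = (single (single i e) 1 :: 'a::comm_ring_1 mpoly)"
  by (induction e) (auto simp: mvar_def mult_single single_add[symmetric])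

lemma msubst_mvar_id [simp]: "msubst mvar p = p"
proof -
  have prod_single: "(\<Prod>k\<in>S. single (f k) (1::'a)) = single (sum f S) 1"
    for f :: "nat \<Rightarrow> nat \<Rightarrow>\<^sub>0 nat" and S
    by (induction S rule: infinite_finite_induct) (auto simp: mult_single)
  have "subst_monom mvar m = (single m 1 :: 'a mpoly)" for m
    by (simp add: subst_monom_def mvar_power prod_single sum_single_lookup)
  then show ?thesis
    by (simp add: msubst_eq_sum_subst_monom mconst_def mult_single sum_single_lookup)
qed

subsection \<open>Polynomials in a given set of variables\<close>

lemma polys_in_iff: "p \<in> polys_in V \<longleftrightarrow> (\<forall>m\<in>keys p. keys m \<subseteq> V)"
  by (auto simp: polys_in_def mvars_def)

lemma polys_in_mono: "p \<in> polys_in V \<Longrightarrow> V \<subseteq> W \<Longrightarrow> p \<in> polys_in W"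
  by (auto simp: polys_in_iff)

lemma polys_in_UNIV: "p \<in> polys_in UNIV"
  by (simp add: polys_in_def)

lemma polys_in_mconst: "mconst a \<in> polys_in V"
  by (simp add: polys_in_iff mconst_def)

lemma polys_in_mvar: "i \<in> V \<Longrightarrow> mvar i \<in> polys_in V"
  by (simp add: polys_in_iff mvar_def)

lemma polys_in_add: "p \<in> polys_in V \<Longrightarrow> q \<in> polys_in V \<Longrightarrow> p + q \<in> polys_in V"
  using keys_add[of p q] by (auto simp: polys_in_iff)

lemma polys_in_diff:
  "(p :: 'a::ab_group_add mpoly) \<in> polys_in V \<Longrightarrow> q \<in> polys_in V \<Longrightarrow> p - q \<in> polys_in V"
  using polys_in_add[of p V "- q"] by (simp add: polys_in_iff)

lemma polys_in_mult:
  fixes p q :: "'a::comm_ring_1 mpoly"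
  assumes "p \<in> polys_in V" "q \<in> polys_in V"
  shows "p * q \<in> polys_in V"
  unfolding polys_in_iff
proof
  fix m assume "m \<in> keys (p * q)"
  then obtain a b where "a \<in> keys p" "b \<in> keys q" "m = a + b"
    using keys_mult by blast
  then show "keys m \<subseteq> V"
    using assms keys_add[of a b] unfolding polys_in_iff by blast
qed

lemma polys_in_sum: "(\<And>x. x \<in> S \<Longrightarrow> f x \<in> polys_in V) \<Longrightarrow> sum f S \<in> polys_in V"
  by (induction S rule: infinite_finite_induct)
    (auto intro: polys_in_add polys_in_mconst[of 0, simplified])

lemma polys_in_power: "(p :: 'a::comm_ring_1 mpoly) \<in> polys_in V \<Longrightarrow> p ^ k \<in> polys_in V"
  by (induction k) (auto intro: polys_in_mult simp: polys_in_mconst simp flip: mconst_1)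

lemma polys_in_induct [consumes 1, case_names mconst mvar add mult]:
  fixes p :: "'a::comm_ring_1 mpoly"
  assumes p: "p \<in> polys_in V"
    and mconst: "\<And>a. P (mconst a)"
    and mvar: "\<And>i. i \<in> V \<Longrightarrow> P (mvar i)"
    and add: "\<And>p q. P p \<Longrightarrow> P q \<Longrightarrow> P (p + q)"
    and mult: "\<And>p q. P p \<Longrightarrow> P q \<Longrightarrow> P (p * q)"
  shows "P p"
proof -
  have sum: "P (sum f S)" if "\<And>x. x \<in> S \<Longrightarrow> P (f x)" for f :: "(nat \<Rightarrow>\<^sub>0 nat) \<Rightarrow> 'a mpoly" and S
    using that by (induction S rule: infinite_finite_induct) (auto intro: add mconst[of 0, simplified])
  have prod: "P (prod f S)" if "\<And>x. x \<in> S \<Longrightarrow> P (f x)" for f :: "nat \<Rightarrow> 'a mpoly" and S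
    using that by (induction S rule: infinite_finite_induct) (auto intro: mult mconst[of 1, simplified])
  have power: "P (x ^ k)" if "P x" for x :: "'a mpoly" and k
    using that by (induction k) (auto intro: mult mconst[of 1, simplified])
  have "P (msubst mvar p)"
    unfolding msubst_eq_sum_subst_monom subst_monom_def
    using p by (intro sum mult mconst prod power mvar) (auto simp: polys_in_iff)
  then show ?thesis
    by simp
qed

lemma msubst_cong:
  "p \<in> polys_in V \<Longrightarrow> (\<And>i. i \<in> V \<Longrightarrow> \<sigma> i = \<tau> i) \<Longrightarrow> msubst \<sigma> p = msubst \<tau> p"
  by (induction p rule: polys_in_induct) (auto simp: msubst_add msubst_mult)

lemma msubst_in_polys_in:
  "p \<in> polys_in V \<Longrightarrow> (\<And>i. i \<in> V \<Longrightarrow> \<sigma> i \<in> polys_in W) \<Longrightarrow> msubst \<sigma> p \<in> polys_in W"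
  by (induction p rule: polys_in_induct)
    (auto simp: msubst_add msubst_mult intro: polys_in_mconst polys_in_add polys_in_mult)

lemma msubst_msubst: "msubst \<sigma> (msubst \<tau> p) = msubst (\<lambda>i. msubst \<sigma> (\<tau> i)) p"
  using polys_in_UNIV[of p] by (induction p rule: polys_in_induct) (auto simp: msubst_add msubst_mult)

subsection \<open>Partial derivatives\<close>

definition mderiv :: "nat \<Rightarrow> 'a::comm_ring_1 mpoly \<Rightarrow> 'a mpoly" where
  "mderiv i p = (\<Sum>m\<in>keys p. single (m - single i 1) (of_nat (lookup m i) * lookup p m))"

lemma mderiv_single: "mderiv i (single m a) = single (m - single i 1) (of_nat (lookup m i) * a)"
  by (simp add: mderiv_def)

lemma mderiv_0 [simp]: "mderiv i 0 = 0"
  by (simp add: mderiv_def)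

lemma mderiv_add: "mderiv i (p + q) = mderiv i p + mderiv i q"
  unfolding mderiv_def
  by (rule setsum_keys_plus_distrib) (simp_all add: distrib_left single_add)

lemma mderiv_sum: "mderiv i (sum f S) = (\<Sum>x\<in>S. mderiv i (f x))"
  by (induction S rule: infinite_finite_induct) (auto simp: mderiv_add)

lemma mderiv_mconst [simp]: "mderiv i (mconst a) = 0"
  by (simp add: mconst_def mderiv_single)

lemma mderiv_mvar: "mderiv i (mvar j) = (if i = j then 1 else 0)"
  by (simp add: mvar_def mderiv_single lookup_single)

lemma mderiv_mult:
  fixes p q :: "'a::comm_ring_1 mpoly"
  shows "mderiv i (p * q) = mderiv i p * q + p * mderiv i q"
proof -
  have shift: "single (m - single i 1 + m') (of_nat (lookup m i) * c)
      = single (m + m' - single i 1) (of_nat (lookup m i) * c)" for m m' and c :: 'a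
  proof (cases "lookup m i = 0")
    case False
    then have "m - single i 1 + m' = m + m' - single i 1"
      by (intro diff_single_add_commute) simp
    then show ?thesis by simp
  qed simp
  have single: "mderiv i (single m a * single m' b)
      = mderiv i (single m a) * single m' b + single m a * mderiv i (single m' b)" for m m' and a b :: 'a
  proof -
    have "mderiv i (single m a) * single m' b
        = single (m + m' - single i 1) (of_nat (lookup m i) * (a * b))"
      using shift[of m m' "a * b"] by (simp add: mderiv_single mult_single ac_simps)
    moreover have "single m a * mderiv i (single m' b)
        = single (m + m' - single i 1) (of_nat (lookup m' i) * (a * b))"
      using shift[of m' m "a * b"] by (simp add: mderiv_single mult_single ac_simps)
    ultimately show ?thesis
      by (simp add: mderiv_single mult_single lookup_add distrib_right flip: single_add)
  qed
  have "mderiv i (p * q) = (\<Sum>m\<in>keys p. \<Sum>m'\<in>keys q.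
      mderiv i (single m (lookup p m)) * single m' (lookup q m')
      + single m (lookup p m) * mderiv i (single m' (lookup q m')))"
    by (simp add: mult_eq_sum_single[of p q] mderiv_sum single)
  also have "\<dots> = mderiv i (\<Sum>m\<in>keys p. single m (lookup p m))
        * (\<Sum>m'\<in>keys q. single m' (lookup q m'))
      + (\<Sum>m\<in>keys p. single m (lookup p m)) * mderiv i (\<Sum>m'\<in>keys q. single m' (lookup q m'))"
    by (simp add: mderiv_sum sum_product sum.distrib)
  finally show ?thesis
    by (simp only: sum_single_lookup)
qed

lemma mderiv_msubst:
  assumes "p \<in> polys_in V" "finite V"
  shows "mderiv i (msubst \<sigma> p) = (\<Sum>j\<in>V. msubst \<sigma> (mderiv j p) * mderiv i (\<sigma> j))"
  using assms(1)
proof (induction p rule: polys_in_induct)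
  case (mconst a)
  then show ?case by simp
next
  case (mvar k)
  have "(\<Sum>j\<in>V. msubst \<sigma> (mderiv j (mvar k)) * mderiv i (\<sigma> j))
      = (\<Sum>j\<in>V. if j = k then mderiv i (\<sigma> j) else 0)"
    by (rule sum.cong) (auto simp: mderiv_mvar)
  then show ?case
    using mvar assms(2) by simp
next
  case (add p q)
  then show ?case
    by (simp add: msubst_add mderiv_add distrib_right sum.distrib)
next
  case (mult p q)
  then show ?case
    by (simp add: msubst_mult mderiv_mult msubst_add distrib_right distrib_left
        sum.distrib sum_distrib_left sum_distrib_right ac_simps)
qed

lemma keys_mderiv:
  assumes "m \<in> keys (mderiv i p)"
  obtains m' where "m' \<in> keys p" "0 < lookup m' i" "m = m' - single i 1"
proof -
  have "keys (mderiv i p)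
      \<subseteq> (\<Union>m'\<in>keys p. keys (single (m' - single i 1) (of_nat (lookup m' i) * lookup p m')))"
    unfolding mderiv_def by (rule keys_sum)
  with assms obtain m' where "m' \<in> keys p"
    and "m \<in> keys (single (m' - single i 1) (of_nat (lookup m' i) * lookup p m'))"
    by blast
  with that show ?thesis
    by (cases "lookup m' i = 0") (auto split: if_splits)
qed

lemma mderiv_in_polys_in: "p \<in> polys_in V \<Longrightarrow> mderiv i p \<in> polys_in V"
  using keys_diff_single_subset by (fastforce simp: polys_in_iff elim!: keys_mderiv)

lemma lookup_mderiv:
  assumes "0 < lookup m i"
  shows "lookup (mderiv i p) (m - single i 1) = of_nat (lookup m i) * lookup p m"
proof -
  have "lookup m' i = 0" if "m' - single i 1 = m - single i 1" "m' \<noteq> m" for m'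
    using that assms diff_single_add_single[of m' i] diff_single_add_single[of m i] by force
  then have "lookup (mderiv i p) (m - single i 1)
      = (\<Sum>m'\<in>keys p. if m' = m then of_nat (lookup m i) * lookup p m else 0)"
    unfolding mderiv_def lookup_sum
    by (intro sum.cong) (auto simp: lookup_single when_def)
  then show ?thesis
    by (simp add: in_keys_iff)
qed

definition monomial_degree :: "(nat \<Rightarrow>\<^sub>0 nat) \<Rightarrow> nat" where
  "monomial_degree m = (\<Sum>i\<in>keys m. lookup m i)"

lemma monomial_degree_diff_single_less:
  "0 < lookup m i \<Longrightarrow> monomial_degree (m - single i 1) < monomial_degree m"
proof -
  assume i: "0 < lookup m i"
  have "monomial_degree (m - single i 1) = (\<Sum>k\<in>keys m. lookup (m - single i 1) k)"
    unfolding monomial_degree_def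
    by (rule sum.mono_neutral_left) (auto simp: in_keys_iff lookup_minus)
  also have "\<dots> < monomial_degree m"
    unfolding monomial_degree_def using i
    by (intro sum_strict_mono_ex1)
      (auto simp: lookup_minus lookup_single in_keys_iff intro!: bexI[of _ i])
  finally show ?thesis .
qed

lemma mderiv_eq_0_imp_mconst:
  fixes p :: "'a::{idom,ring_char_0} mpoly"
  assumes p: "p \<in> polys_in V" and deriv: "\<And>i. i \<in> V \<Longrightarrow> mderiv i p = 0"
  shows "p = mconst (lookup p 0)"
proof -
  have "m = 0" if m: "m \<in> keys p" for m
  proof (rule ccontr)
    assume "m \<noteq> 0"
    then obtain j where j: "j \<in> keys m"
      by (metis all_not_in_conv keys_eq_empty)
    have "j \<in> V"
      using p m j by (auto simp: polys_in_iff)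
    moreover have "0 < lookup m j"
      using j by (simp add: in_keys_iff)
    ultimately show False
      using lookup_mderiv[of m j p] deriv m by (simp add: in_keys_iff)
  qed
  then show ?thesis
    by (intro poly_mapping_eqI) (auto simp: mconst_def lookup_single when_def in_keys_iff)
qed

subsection \<open>Coordinate systems\<close>

lemma mat_mult_eq_one_left_kernel:
  fixes A B :: "'a::idom mat" and v :: "nat \<Rightarrow> 'a"
  assumes A: "A \<in> carrier_mat n n" and B: "B \<in> carrier_mat n n" and AB: "A * B = 1\<^sub>m n"
    and kernel: "\<And>i. i < n \<Longrightarrow> (\<Sum>j<n. v j * B $$ (j, i)) = 0" and l: "l < n"
  shows "v l = 0"
proof -
  have "det A * det B = 1"
    using det_mult[OF A B] AB by simp
  then have "det B \<noteq> 0"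
    by auto
  let ?C = "adj_mat B"
  have C: "?C \<in> carrier_mat n n" and BC: "B * ?C = det B \<cdot>\<^sub>m 1\<^sub>m n"
    using adj_mat[OF B] by auto
  have entry: "(B * ?C) $$ (j, l) = (\<Sum>i<n. B $$ (j, i) * ?C $$ (i, l))" if "j < n" for j
    using that l B C by (auto simp: scalar_prod_def atLeast0LessThan intro: sum.cong)
  have "(\<Sum>j<n. v j * (B * ?C) $$ (j, l)) = (\<Sum>j<n. if j = l then v j * det B else 0)"
    by (rule sum.cong) (use l in \<open>auto simp: BC\<close>)
  then have "v l * det B = (\<Sum>j<n. v j * (B * ?C) $$ (j, l))"
    using l by simp
  also have "\<dots> = (\<Sum>j<n. \<Sum>i<n. v j * (B $$ (j, i) * ?C $$ (i, l)))"
    by (rule sum.cong) (auto simp: entry sum_distrib_left)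
  also have "\<dots> = (\<Sum>i<n. (\<Sum>j<n. v j * B $$ (j, i)) * ?C $$ (i, l))"
    by (subst sum.swap) (simp add: sum_distrib_right mult.assoc)
  also have "\<dots> = 0"
    by (simp add: kernel)
  finally show ?thesis
    using \<open>det B \<noteq> 0\<close> by simp
qed

locale coordinate_system =
  fixes n :: nat and ys q :: "nat \<Rightarrow> 'a::field_char_0 mpoly"
  assumes ys_in: "\<And>i. i < n \<Longrightarrow> ys i \<in> polys_in {..<n}"
    and q_in: "\<And>i. i < n \<Longrightarrow> q i \<in> polys_in {..<n}"
    and msubst_q: "\<And>i. i < n \<Longrightarrow> msubst ys (q i) = mvar i"
begin

lemma msubst_mderiv_eq_0:
  assumes F: "F \<in> polys_in {..<n}" and F0: "msubst ys F = 0" and j: "j < n"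
  shows "msubst ys (mderiv j F) = 0"
proof -
  \<comment> \<open>The chain rule applied to \<open>q(ys) = x\<close> makes \<open>A\<close> a left inverse of the Jacobian \<open>B\<close> of \<open>ys\<close>.\<close>
  define A where "A = mat n n (\<lambda>(k, j). msubst ys (mderiv j (q k)))"
  define B where "B = mat n n (\<lambda>(j, i). mderiv i (ys j))"
  have AB: "A * B = 1\<^sub>m n"
  proof (rule eq_matI)
    fix k i assume "k < dim_row (1\<^sub>m n)" "i < dim_col (1\<^sub>m n)"
    then have k: "k < n" and i: "i < n" by auto
    have "(A * B) $$ (k, i) = (\<Sum>j<n. msubst ys (mderiv j (q k)) * mderiv i (ys j))"
      using k i by (auto simp: A_def B_def scalar_prod_def atLeast0LessThan intro: sum.cong)
    also have "\<dots> = mderiv i (msubst ys (q k))"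
      by (simp add: mderiv_msubst[OF q_in[OF k]])
    also have "\<dots> = 1\<^sub>m n $$ (k, i)"
      using k i by (simp add: msubst_q mderiv_mvar)
    finally show "(A * B) $$ (k, i) = 1\<^sub>m n $$ (k, i)" .
  qed (auto simp: A_def B_def)
  have kernel: "(\<Sum>j<n. msubst ys (mderiv j F) * B $$ (j, i)) = 0" if i: "i < n" for i
  proof -
    have "(\<Sum>j<n. msubst ys (mderiv j F) * B $$ (j, i)) = mderiv i (msubst ys F)"
      using i by (simp add: mderiv_msubst[OF F] B_def)
    then show ?thesis
      using F0 by simp
  qed
  show ?thesis
    by (rule mat_mult_eq_one_left_kernel[OF _ _ AB kernel j]) (simp_all add: A_def B_def)
qed

lemma msubst_eq_0_imp_eq_0:
  assumes "F \<in> polys_in {..<n}" "msubst ys F = 0"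
  shows "F = 0"
proof -
  have "F = 0" if "F \<in> polys_in {..<n}" "msubst ys F = 0" "\<forall>m\<in>keys F. monomial_degree m < N" for F N
    using that
  proof (induction N arbitrary: F)
    case 0
    then show ?case by auto
  next
    case (Suc N)
    have "mderiv j F = 0" if j: "j < n" for j
    proof (rule Suc.IH)
      show "mderiv j F \<in> polys_in {..<n}"
        using Suc.prems(1) by (rule mderiv_in_polys_in)
      show "msubst ys (mderiv j F) = 0"
        using Suc.prems(1,2) j by (rule msubst_mderiv_eq_0)
      show "\<forall>m\<in>keys (mderiv j F). monomial_degree m < N"
      proof
        fix m assume "m \<in> keys (mderiv j F)"
        then obtain m' where "m' \<in> keys F" "0 < lookup m' j" "m = m' - single j 1"
          by (rule keys_mderiv)
        then show "monomial_degree m < N"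
          using Suc.prems(3) monomial_degree_diff_single_less[of m' j] by fastforce
      qed
    qed
    then have "F = mconst (lookup F 0)"
      using Suc.prems(1) by (intro mderiv_eq_0_imp_mconst[of F "{..<n}"]) auto
    then show ?case
      using Suc.prems(2) by (metis msubst_mconst)
  qed
  moreover have "\<forall>m\<in>keys F. monomial_degree m < Suc (Max (monomial_degree ` keys F))"
    by (simp add: le_imp_less_Suc)
  ultimately show ?thesis
    using assms by blast
qed

lemma msubst_q_ys: "i < n \<Longrightarrow> msubst q (ys i) = mvar i"
proof -
  assume i: "i < n"
  have "msubst ys (msubst q (ys i)) = msubst (\<lambda>k. msubst ys (q k)) (ys i)"
    by (rule msubst_msubst)
  also have "\<dots> = msubst mvar (ys i)"
    by (rule msubst_cong[OF ys_in[OF i]]) (simp add: msubst_q)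
  also have "\<dots> = msubst ys (mvar i)"
    by simp
  finally have "msubst ys (msubst q (ys i) - mvar i) = 0"
    by (simp add: msubst_diff)
  moreover have "msubst q (ys i) - mvar i \<in> polys_in {..<n}"
    using i by (intro polys_in_diff msubst_in_polys_in[OF ys_in] q_in polys_in_mvar) auto
  ultimately show ?thesis
    using msubst_eq_0_imp_eq_0 by fastforce
qed

end

subsection \<open>Univariate polynomials in a multivariate one\<close>

lemma ucomp_eq_sum_atMost:
  assumes "degree l \<le> N"
  shows "ucomp l y = (\<Sum>k\<le>N. mconst (coeff l k) * y ^ k)"
  unfolding ucomp_def
  by (rule sum.mono_neutral_left) (use assms in \<open>auto simp: coeff_eq_0\<close>)

lemma ucomp_0 [simp]: "ucomp 0 y = 0"
  by (simp add: ucomp_def)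

lemma ucomp_add: "ucomp (l1 + l2) y = ucomp l1 y + ucomp l2 y"
proof -
  let ?N = "max (degree l1) (degree l2)"
  have "ucomp (l1 + l2) y = (\<Sum>k\<le>?N. mconst (coeff (l1 + l2) k) * y ^ k)"
    by (rule ucomp_eq_sum_atMost) (simp add: degree_add_le)
  also have "\<dots> = ucomp l1 y + ucomp l2 y"
    by (simp add: ucomp_eq_sum_atMost[of l1 ?N] ucomp_eq_sum_atMost[of l2 ?N] mconst_add
        distrib_right sum.distrib)
  finally show ?thesis .
qed

lemma ucomp_sum: "ucomp (sum f S) y = (\<Sum>x\<in>S. ucomp (f x) y)"
  by (induction S rule: infinite_finite_induct) (auto simp: ucomp_add)

lemma ucomp_monom: "ucomp (monom a k) y = mconst a * y ^ k"
proof -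
  have "ucomp (monom a k) y = (\<Sum>j\<le>k. mconst (coeff (monom a k) j) * y ^ j)"
    by (rule ucomp_eq_sum_atMost) (rule degree_monom_le)
  also have "\<dots> = (\<Sum>j\<le>k. if j = k then mconst a * y ^ k else 0)"
    by (rule sum.cong) auto
  finally show ?thesis
    by simp
qed

lemma msubst_ucomp: "msubst \<sigma> (ucomp l y) = ucomp l (msubst \<sigma> y)"
  by (simp add: ucomp_def msubst_sum msubst_mult msubst_power)

lemma ucomp_diff_ucomp:
  "ucomp l y - ucomp l z
    = (y - z) * (\<Sum>k\<le>degree l. mconst (coeff l k) * (\<Sum>i<k. z ^ (k - Suc i) * y ^ i))"
proof -
  have "(y - z) * (\<Sum>k\<le>degree l. mconst (coeff l k) * (\<Sum>i<k. z ^ (k - Suc i) * y ^ i))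
      = (\<Sum>k\<le>degree l. mconst (coeff l k) * ((y - z) * (\<Sum>i<k. z ^ (k - Suc i) * y ^ i)))"
    by (simp add: sum_distrib_left ac_simps)
  also have "\<dots> = (\<Sum>k\<le>degree l. mconst (coeff l k) * y ^ k - mconst (coeff l k) * z ^ k)"
    by (simp add: power_diff_sumr2[symmetric] right_diff_distrib)
  finally show ?thesis
    by (simp add: ucomp_def sum_subtractf)
qed

lemma msubst_first_var_eq_ucomp: "\<exists>l. msubst (\<lambda>i. if i = 0 then y else 0) p = ucomp l y"
proof
  let ?\<rho> = "\<lambda>i. if i = 0 then y else 0"
  let ?l = "\<Sum>m\<in>keys p. if keys m \<subseteq> {0} then monom (lookup p m) (lookup m 0) else 0"
  have monom: "subst_monom ?\<rho> m = (if keys m \<subseteq> {0} then y ^ lookup m 0 else 0)" for m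
  proof (cases "keys m \<subseteq> {0}")
    case True
    then have "keys m = {} \<or> keys m = {0}"
      by blast
    then show ?thesis
      by (auto simp: subst_monom_def)
  next
    case False
    then obtain i where "i \<in> keys m" "i \<noteq> 0"
      by auto
    then show ?thesis
      using False by (auto simp: subst_monom_def in_keys_iff zero_power intro!: prod_zero bexI[of _ i])
  qed
  show "msubst ?\<rho> p = ucomp ?l y"
    unfolding msubst_eq_sum_subst_monom ucomp_sum
    by (rule sum.cong) (simp_all add: monom ucomp_monom)
qed

lemma shiftvars_in_polys_in: "p \<in> polys_in {..<n} \<Longrightarrow> shiftvars n p \<in> polys_in {..<2 * n}"
  unfolding shiftvars_def by (rule msubst_in_polys_in) (auto intro: polys_in_mvar)

lemma ucomp_diff_shiftvars_factor:
  assumes y: "y \<in> polys_in {..<n}"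
  shows "\<exists>q \<in> polys_in {..<2 * n}. ucomp l y - shiftvars n (ucomp l y) = (y - shiftvars n y) * q"
proof -
  have "y \<in> polys_in {..<2 * n}"
    using y by (rule polys_in_mono) auto
  then show ?thesis
    using shiftvars_in_polys_in[OF y]
    by (auto simp: shiftvars_def msubst_ucomp ucomp_diff_ucomp
        intro!: polys_in_sum polys_in_mult polys_in_mconst polys_in_power)
qed

lemma shiftvars_factor_imp_ucomp:
  fixes c y :: "'a::field_char_0 mpoly"
  assumes coord: "is_coordinate n y"
    and c: "c \<in> polys_in {..<n}" and y: "y \<in> polys_in {..<n}"
    and factor: "c - shiftvars n c = (y - shiftvars n y) * Q"
  shows "\<exists>l. c = ucomp l y"
proof -
  obtain ys q where n: "0 < n" and ys0: "ys 0 = y"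
    and ys_in: "\<forall>i<n. ys i \<in> polys_in {..<n}"
    and q: "\<forall>i<n. q i \<in> polys_in {..<n} \<and> msubst ys (q i) = mvar i"
    using coord unfolding is_coordinate_def by metis
  interpret coordinate_system n ys q
    by unfold_locales (use ys_in q in auto)
  define \<rho> where "\<rho> = (\<lambda>i::nat. if i = 0 then y else 0)"
  define \<tau> where "\<tau> = (\<lambda>i. if i < n then mvar i else msubst \<rho> (q (i - n)))"
  have \<tau>_fix: "msubst \<tau> p = p" if "p \<in> polys_in {..<n}" for p
    using msubst_cong[OF that, of \<tau> mvar] by (simp add: \<tau>_def)
  have \<tau>_shiftvars: "msubst \<tau> (shiftvars n p) = msubst \<rho> (msubst q p)" if "p \<in> polys_in {..<n}" for p
    unfolding shiftvars_def msubst_msubst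
    by (rule msubst_cong[OF that]) (simp add: \<tau>_def)
  have "msubst \<rho> (msubst q y) = y"
    using msubst_q_ys[OF n] ys0 by (simp add: \<rho>_def)
  then have "c - msubst \<rho> (msubst q c) = 0"
    using arg_cong[OF factor, of "msubst \<tau>"]
    by (simp add: msubst_diff msubst_mult \<tau>_fix[OF c] \<tau>_fix[OF y] \<tau>_shiftvars[OF c] \<tau>_shiftvars[OF y])
  then show ?thesis
    using msubst_first_var_eq_ucomp[of y "msubst q c"] by (auto simp: \<rho>_def)
qed

theorem proposition4p2:
  fixes c y1 :: "'a::{field_char_0} mpoly" and n :: nat
  assumes "c \<in> polys_in {..<n}" and "y1 \<in> polys_in {..<n}"
    and "c \<notin> range mconst"
  shows "((\<exists>l :: 'a poly. c = ucomp l y1) \<and> is_coordinate n y1) \<longleftrightarrow>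
         ((\<exists>q \<in> polys_in {..<2*n}. c - shiftvars n c = (y1 - shiftvars n y1) * q)
          \<and> is_coordinate n y1)"
  using ucomp_diff_shiftvars_factor[OF assms(2)] shiftvars_factor_imp_ucomp[OF _ assms(1,2)]
  by blast

end
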